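(* Assume the setting and hypotheses below (with $d=2$). For $x\in X$, $t\in\mathbb{R}^2$ and $N\in\mathbb{N}$ let $\ell(x,t,N)=\mathrm{Card}(n\in\{0,1,\dots,N\}:\|\tau_n(x)-t\|\le1)$. Then for each $p\in\mathbb{N}$ there is a constant $C_p$ such that for each $t\in\mathbb{R}^2$ and each integer $N\ge2$, $\int_X\ell^p(x,t,N)\,d\mu(x)\le C_p\ln^pN$.
   Context: Setting: $f:X\to X$ smooth map of a manifold preserving a probability $\mu$, ergodic, satisfying the CLT for smooth observables; $(G_t)_{t\in\mathbb{R}^2}$ an $\mathbb{R}^2$ action on a manifold $Y$ preserving a probability $\nu$ enjoying multiple exponential mixing of all orders; $\tau:X\to\mathbb{R}^2$ smooth with $\tau_n=\sum_{k=0}^{n-1}\tau\circ f^k$, satisfying the MMLLT (multiple mixing local limit theorem with a non-degenerate Gaussian density) and the anticoncentration large deviation bound: for every $s\ge1$ there are $K$ and a decreasing $\Theta$ with $\int_1^\infty\Theta(r)r^2dr<\infty$ such that for all integers $0=n_0<n_1<\dots<n_s$ and unit cubes $C_j$ centered at $c_j$ ($c_0=0$), $\mu(x:\tau_{n_j}(x)\in C_j,\ j=1,\dots,s)\le K\prod_{j=1}^s(n_j-n_{j-1})^{-1}\Theta\left(\max_j\frac{\|c_j-c_{j-1}\|}{\sqrt{n_j-n_{j-1}}}\right)$. *)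

theory Defs
  imports "HOL-Probability.Probability"
begin

definition birkhoff_sum :: "('a \<Rightarrow> 'a) \<Rightarrow> ('a \<Rightarrow> real^2) \<Rightarrow> nat \<Rightarrow> 'a \<Rightarrow> real^2" where
  "birkhoff_sum f \<tau> n x = (\<Sum>k<n. \<tau> ((f ^^ k) x))"

definition unit_cube :: "real^2 \<Rightarrow> (real^2) set" where
  "unit_cube c = {y. \<forall>i. \<bar>y $ i - c $ i\<bar> \<le> 1/2}"

definition local_time :: "('a \<Rightarrow> 'a) \<Rightarrow> ('a \<Rightarrow> real^2) \<Rightarrow> 'a \<Rightarrow> real^2 \<Rightarrow> nat \<Rightarrow> nat" where
  "local_time f \<tau> x t N = card {n \<in> {0..N}. norm (birkhoff_sum f \<tau> n x - t) \<le> 1}"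

definition anticoncentration :: "'a measure \<Rightarrow> ('a \<Rightarrow> 'a) \<Rightarrow> ('a \<Rightarrow> real^2) \<Rightarrow> bool" where
  "anticoncentration \<mu> f \<tau> \<longleftrightarrow>
    (\<forall>s::nat. s \<ge> 1 \<longrightarrow>
      (\<exists>(K::real) (\<Theta>::real \<Rightarrow> real).
         antimono \<Theta> \<and>
         (\<lambda>r. \<Theta> r * r ^ 2) integrable_on {1..} \<and>
         (\<forall>(n::nat \<Rightarrow> nat) (c::nat \<Rightarrow> real^2).
            n 0 = 0 \<longrightarrow> (\<forall>j\<in>{1..s}. n (j - 1) < n j) \<longrightarrow> c 0 = 0 \<longrightarrow>
            measure \<mu> {x \<in> space \<mu>. \<forall>j\<in>{1..s}. birkhoff_sum f \<tau> (n j) x \<in> unit_cube (c j)}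
              \<le> K * (\<Prod>j\<in>{1..s}. 1 / real (n j - n (j - 1)))
                  * \<Theta> (Max ((\<lambda>j. norm (c j - c (j - 1)) / sqrt (real (n j - n (j - 1)))) ` {1..s})))))"

end

theory Submission
  imports Defs
begin

(* The local time is at most 1 + a, where a counts the visits to the unit ball around t at times
   1..N, and a^p <= p^p (1 + (a choose p)), where (a choose p) counts the increasing p-tuples of
   visit times. A visit puts the Birkhoff sum into one of nine unit cubes around t, so by the
   anticoncentration bound (with Theta(max ...) <= Theta 0, and Theta >= 0 because Theta r * r^2 is
   integrable) a tuple n_1 < ... < n_p consists of visit times with probability at most
   C * prod_j 1/(n_j - n_(j-1)), n_0 = 0. Summing over all tuples in {1..N} gives at most
   (harm N)^p, and harm N <= 5/2 * ln N for N >= 2. *)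

definition increasing_tuples :: "'a::linorder set \<Rightarrow> nat \<Rightarrow> 'a list set" where
  "increasing_tuples S k = {xs. sorted_wrt (<) xs \<and> length xs = k \<and> set xs \<subseteq> S}"

lemma finite_increasing_tuples:
  assumes "finite S"
  shows "finite (increasing_tuples S k)"
  unfolding increasing_tuples_def
  by (rule finite_subset[OF _ finite_lists_length_eq[OF assms, of k]]) auto

lemma bij_betw_set_increasing_tuples:
  assumes "finite S"
  shows "bij_betw set (increasing_tuples S k) {B. B \<subseteq> S \<and> card B = k}"
proof (rule bij_betw_imageI)
  show "inj_on set (increasing_tuples S k)"
  proof (rule inj_onI)
    fix xs ys
    assume "xs \<in> increasing_tuples S k" "ys \<in> increasing_tuples S k" "set xs = set ys"
    then show "xs = ys"
      by (intro strict_sorted_equal) (auto simp: increasing_tuples_def)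
  qed
  show "set ` increasing_tuples S k = {B. B \<subseteq> S \<and> card B = k}"
  proof (intro equalityI subsetI)
    fix B assume "B \<in> set ` increasing_tuples S k"
    then show "B \<in> {B. B \<subseteq> S \<and> card B = k}"
      by (auto simp: increasing_tuples_def strict_sorted_iff distinct_card)
  next
    fix B assume B: "B \<in> {B. B \<subseteq> S \<and> card B = k}"
    then have "finite B" using assms finite_subset by blast
    with B have "sorted_list_of_set B \<in> increasing_tuples S k"
      by (simp add: increasing_tuples_def)
    with \<open>finite B\<close> show "B \<in> set ` increasing_tuples S k"
      by (metis image_eqI set_sorted_list_of_set)
  qed
qed

lemma card_increasing_tuples:
  assumes "finite S"
  shows "card (increasing_tuples S k) = card S choose k"
  using bij_betw_same_card[OF bij_betw_set_increasing_tuples[OF assms]] n_subsets[OF assms]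
  by simp

lemma increasing_tuples_Suc:
  "increasing_tuples {a<..N} (Suc k) = (\<lambda>(m, ys). m # ys) ` (SIGMA m:{a<..N}. increasing_tuples {m<..N} k)"
proof (intro equalityI subsetI)
  fix xs assume xs: "xs \<in> increasing_tuples {a<..N} (Suc k)"
  then obtain m ys where "xs = m # ys" unfolding increasing_tuples_def by (cases xs) auto
  with xs show "xs \<in> (\<lambda>(m, ys). m # ys) ` (SIGMA m:{a<..N}. increasing_tuples {m<..N} k)"
    by (intro rev_image_eqI[of "(m, ys)"]) (auto simp: increasing_tuples_def)
next
  fix xs assume "xs \<in> (\<lambda>(m, ys). m # ys) ` (SIGMA m:{a<..N}. increasing_tuples {m<..N} k)"
  then show "xs \<in> increasing_tuples {a<..N} (Suc k)"
    unfolding increasing_tuples_def by (auto simp: subset_iff) (meson less_trans)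
qed

fun gap_weight :: "nat \<Rightarrow> nat list \<Rightarrow> real" where
  "gap_weight a [] = 1"
| "gap_weight a (m # ys) = 1 / real (m - a) * gap_weight m ys"

lemma prod_gaps_eq_gap_weight:
  "(\<Prod>j\<in>{1..length xs}. 1 / real ((a # xs) ! j - (a # xs) ! (j - 1))) = gap_weight a xs"
proof (induction xs arbitrary: a)
  case (Cons m ys)
  have "{1..length (m # ys)} = insert 1 (Suc ` {1..length ys})"
    by (auto simp: image_Suc_atLeastAtMost)
  then have "(\<Prod>j\<in>{1..length (m # ys)}. 1 / real ((a # m # ys) ! j - (a # m # ys) ! (j - 1)))
     = 1 / real (m - a) * (\<Prod>j\<in>Suc ` {1..length ys}. 1 / real ((a # m # ys) ! j - (a # m # ys) ! (j - 1)))"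
    by simp
  also have "(\<Prod>j\<in>Suc ` {1..length ys}. 1 / real ((a # m # ys) ! j - (a # m # ys) ! (j - 1)))
     = (\<Prod>j\<in>{1..length ys}. 1 / real ((m # ys) ! j - (m # ys) ! (j - 1)))"
    by (subst prod.reindex) (auto intro!: prod.cong simp: Suc_pred' nth_Cons')
  also have "\<dots> = gap_weight m ys"
    by (rule Cons.IH)
  finally show ?case by simp
qed simp

lemma sum_inverse_gaps_le_harm: "(\<Sum>m\<in>{a<..N}. 1 / real (m - a)) \<le> harm N"
proof -
  have "(\<Sum>m\<in>{a<..N}. 1 / real (m - a)) = (\<Sum>i\<in>(\<lambda>m. m - a) ` {a<..N}. 1 / real i)"
    by (subst sum.reindex) (auto simp: inj_on_def)
  also have "\<dots> \<le> (\<Sum>i=1..N. 1 / real i)"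
    by (rule sum_mono2) auto
  finally show ?thesis by (simp add: harm_def divide_inverse)
qed

lemma sum_gap_weight_le_harm_power:
  "(\<Sum>xs\<in>increasing_tuples {a<..N} k. gap_weight a xs) \<le> harm N ^ k"
proof (induction k arbitrary: a)
  case 0
  have "increasing_tuples {a<..N} 0 = {[]}" by (auto simp: increasing_tuples_def)
  then show ?case by simp
next
  case (Suc k)
  have "(\<Sum>xs\<in>increasing_tuples {a<..N} (Suc k). gap_weight a xs)
      = (\<Sum>(m, ys)\<in>(SIGMA m:{a<..N}. increasing_tuples {m<..N} k). gap_weight a (m # ys))"
    unfolding increasing_tuples_Suc
    by (subst sum.reindex) (auto simp: inj_on_def intro!: sum.cong split: prod.splits)
  also have "\<dots> = (\<Sum>m\<in>{a<..N}. \<Sum>ys\<in>increasing_tuples {m<..N} k. gap_weight a (m # ys))"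
    by (rule sum.Sigma[symmetric]) (auto simp: finite_increasing_tuples)
  also have "\<dots> = (\<Sum>m\<in>{a<..N}. 1 / real (m - a) * (\<Sum>ys\<in>increasing_tuples {m<..N} k. gap_weight m ys))"
    by (simp add: sum_distrib_left)
  also have "\<dots> \<le> (\<Sum>m\<in>{a<..N}. 1 / real (m - a)) * harm N ^ k"
    unfolding sum_distrib_right by (intro sum_mono mult_left_mono Suc) auto
  also have "\<dots> \<le> harm N * harm N ^ k"
    by (intro mult_right_mono sum_inverse_gaps_le_harm) (simp add: harm_nonneg)
  finally show ?case by simp
qed

lemma one_le_harm: "1 \<le> n \<Longrightarrow> 1 \<le> (harm n :: real)"
  using harm_mono[of 1 n] by (simp add: harm_def)

lemma harm_le_ln:
  assumes "2 \<le> n"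
  shows "harm n \<le> 5 / 2 * ln (real n)"
proof -
  have "harm n - ln (real n) \<le> harm 1 - ln 1"
    using euler_mascheroni_sequence_decreasing[of 1 n] assms by simp
  moreover have "ln 2 \<le> ln (real n)"
    using assms by simp
  moreover note ln2_ge_two_thirds
  ultimately show ?thesis by (simp add: harm_def)
qed

lemma one_plus_power_le:
  fixes x :: real
  assumes "0 \<le> x"
  shows "(1 + x) ^ p \<le> 2 ^ p * (1 + x ^ p)"
proof -
  have "(1 + x) ^ p \<le> (2 * max 1 x) ^ p"
    using assms by (intro power_mono) auto
  also have "\<dots> = 2 ^ p * max 1 x ^ p"
    by (simp add: power_mult_distrib)
  also have "\<dots> \<le> 2 ^ p * (1 + x ^ p)"
    using assms by (cases "x \<le> 1") (simp_all add: max_def)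
  finally show ?thesis .
qed

lemma power_le_choose: "real a ^ p \<le> real p ^ p * (1 + real (a choose p))"
proof (cases "p \<le> a")
  case True
  show ?thesis
  proof (cases "p = 0")
    case False
    have "(real a / real p) ^ p \<le> real (a choose p)"
      using binomial_ge_n_over_k_pow_k[OF True] by simp
    with False have "real a ^ p \<le> real p ^ p * real (a choose p)"
      by (simp add: power_divide divide_le_eq mult.commute)
    then show ?thesis by (simp add: distrib_left add_increasing)
  qed simp
next
  case False
  then have "real a ^ p \<le> real p ^ p" by (intro power_mono) auto
  then show ?thesis by (simp add: distrib_left add_increasing2)
qed

lemma has_integral_interval_indicator:
  fixes a b B :: real
  assumes "a \<le> b" and "{a..b} \<subseteq> S"
  shows "((\<lambda>r. if r \<in> {a..b} then B else 0) has_integral B * (b - a)) S"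
  unfolding has_integral_restrict[OF assms(2)]
  using has_integral_const_real[of B a b] assms(1) by (simp add: content_real mult.commute)

lemma not_integrable_on_atLeast_if_ge_pos:
  fixes u :: "real \<Rightarrow> real"
  assumes nonneg: "\<And>r. a \<le> r \<Longrightarrow> 0 \<le> u r"
    and pos: "0 < c" and tail: "\<And>r. b \<le> r \<Longrightarrow> c \<le> u r"
  shows "\<not> u integrable_on {a..}"
proof
  assume int: "u integrable_on {a..}"
  define b' where "b' = max a b"
  define R where "R = (\<bar>integral {a..} u\<bar> + 1) / c"
  have "R \<ge> 0" using pos by (simp add: R_def)
  then have "((\<lambda>r. if r \<in> {b'..b' + R} then c else 0) has_integral c * R) {a..}"
    using has_integral_interval_indicator[of b' "b' + R" "{a..}" c] by (simp add: b'_def)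
  then have "c * R \<le> integral {a..} u"
    by (rule has_integral_le[OF _ integrable_integral[OF int]])
      (use nonneg tail in \<open>auto simp: b'_def\<close>)
  moreover have "c * R = \<bar>integral {a..} u\<bar> + 1" using pos by (simp add: R_def)
  ultimately show False by linarith
qed

lemma antimono_nonneg_if_integrable_on:
  fixes \<Theta> :: "real \<Rightarrow> real"
  assumes mono: "antimono \<Theta>" and int: "(\<lambda>r. \<Theta> r * r ^ 2) integrable_on {1..}"
  shows "0 \<le> \<Theta> s"
proof (rule ccontr)
  assume neg: "\<not> 0 \<le> \<Theta> s"
  define a where "a = max 1 s"
  define B where "B = \<bar>\<Theta> 1\<bar> * a ^ 2"
  \<comment> \<open>The bump B on [1, a] makes u nonnegative, while u \<ge> - \<Theta> s > 0 on [a, \<infinity>).\<close>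
  define u where "u r = (if r \<in> {1..a} then B else 0) - \<Theta> r * r ^ 2" for r
  have "0 \<le> B" by (simp add: B_def)
  have head: "\<Theta> r * r ^ 2 \<le> B" if "1 \<le> r" "r \<le> a" for r
  proof -
    have "\<Theta> r \<le> \<Theta> 1" using mono that by (simp add: antimono_def)
    have "\<Theta> r * r ^ 2 \<le> max 0 (\<Theta> r) * r ^ 2" by (simp add: mult_right_mono)
    also have "\<dots> \<le> \<bar>\<Theta> 1\<bar> * a ^ 2"
      using \<open>\<Theta> r \<le> \<Theta> 1\<close> that by (intro mult_mono power_mono) auto
    finally show ?thesis by (simp add: B_def)
  qed
  have tail: "\<Theta> r * r ^ 2 \<le> \<Theta> s" if "a \<le> r" for r
  proof -
    have "\<Theta> r \<le> \<Theta> s" using mono that by (simp add: antimono_def a_def)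
    moreover have "1 \<le> r ^ 2" using that by (simp add: a_def one_le_power)
    ultimately have "\<Theta> r * r ^ 2 \<le> \<Theta> r" using neg by (simp add: mult_le_cancel_left1)
    with \<open>\<Theta> r \<le> \<Theta> s\<close> show ?thesis by linarith
  qed
  have "u integrable_on {1..}"
    unfolding u_def using has_integral_interval_indicator[of 1 a "{1..}" B]
    by (intro integrable_diff int) (auto simp: a_def)
  moreover have "0 \<le> u r" if "1 \<le> r" for r
    using that head[OF that] tail[of r] neg \<open>0 \<le> B\<close> by (cases "r \<le> a") (auto simp: u_def)
  moreover have "- \<Theta> s \<le> u r" if "a \<le> r" for r
    using tail[OF that] \<open>0 \<le> B\<close> by (auto simp: u_def)
  ultimately show False
    using not_integrable_on_atLeast_if_ge_pos[of 1 u "- \<Theta> s" a] neg by auto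
qed

definition unit_offsets :: "(real^2) set" where
  "unit_offsets = {v. \<forall>i. v $ i \<in> {-1, 0, 1}}"

lemma finite_unit_offsets: "finite unit_offsets"
proof -
  have offsets_eq: "unit_offsets = vec_nth -` (UNIV \<rightarrow>\<^sub>E {-1, 0, 1})"
    by (auto simp: unit_offsets_def PiE_iff)
  have "finite ((UNIV :: 2 set) \<rightarrow>\<^sub>E {-1, 0, 1 :: real})"
    by (intro finite_PiE) auto
  moreover have "inj vec_nth"
    by (simp add: inj_def vec_nth_inject)
  ultimately show ?thesis
    unfolding offsets_eq by (rule finite_vimageI)
qed

lemma round_mem_if_abs_le_one:
  fixes z :: real
  assumes "\<bar>z\<bar> \<le> 1"
  shows "real_of_int (round z) \<in> {-1, 0, 1}"
proof -
  have "round (-1 :: real) = -1"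
    using round_of_int[of "-1", where 'a = real] by simp
  then have "-1 \<le> round z" "round z \<le> 1"
    using assms round_mono[of "-1" z] round_mono[of z 1] by simp_all
  then have "round z \<in> {-1, 0, 1}" by auto
  then show ?thesis by auto
qed

lemma near_point_in_unit_cube:
  assumes "norm (y - t) \<le> 1"
  shows "\<exists>v\<in>unit_offsets. y \<in> unit_cube (t + v)"
proof
  define v :: "real^2" where "v = (\<chi> i. real_of_int (round ((y - t) $ i)))"
  have "\<bar>(y - t) $ i\<bar> \<le> 1" for i
    using component_le_norm_cart[of "y - t" i] assms by linarith
  then show "v \<in> unit_offsets"
    unfolding unit_offsets_def v_def mem_Collect_eq vec_lambda_beta
    using round_mem_if_abs_le_one by blast
  have "\<bar>(y - t) $ i - of_int (round ((y - t) $ i))\<bar> \<le> 1 / 2" for i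
    using of_int_round_abs_le[of "(y - t) $ i"] by (simp add: abs_minus_commute)
  then show "y \<in> unit_cube (t + v)"
    by (simp add: v_def unit_cube_def diff_diff_eq)
qed

lemma near_points_in_unit_cubes:
  assumes "\<And>j. j \<in> J \<Longrightarrow> norm (y j - t) \<le> 1"
  shows "\<exists>v\<in>J \<rightarrow>\<^sub>E unit_offsets. \<forall>j\<in>J. y j \<in> unit_cube (t + v j)"
proof -
  have "\<forall>j\<in>J. \<exists>v\<in>unit_offsets. y j \<in> unit_cube (t + v)"
    using assms near_point_in_unit_cube by blast
  then obtain v where "\<forall>j\<in>J. v j \<in> unit_offsets \<and> y j \<in> unit_cube (t + v j)"
    unfolding Bex_def by (rule bchoice[THEN exE])
  then show ?thesis by (intro bexI[of _ "restrict v J"]) auto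
qed

lemma closed_unit_cube: "closed (unit_cube c)"
  unfolding unit_cube_def
  by (intro closed_Collect_all closed_Collect_le continuous_intros)

lemma unit_cube_borel [measurable]: "unit_cube c \<in> sets borel"
  by (simp add: closed_unit_cube borel_closed)

lemma borel_measurable_birkhoff_sum [measurable]:
  assumes [measurable]: "f \<in> measurable M M" "\<tau> \<in> borel_measurable M"
  shows "birkhoff_sum f \<tau> n \<in> borel_measurable M"
  unfolding birkhoff_sum_def[abs_def] by measurable

lemma (in finite_measure) integral_card_events:
  assumes "finite L" and sets: "\<And>l. l \<in> L \<Longrightarrow> E l \<in> sets M"
  shows "integrable M (\<lambda>x. real (card {l \<in> L. x \<in> E l}))"
    and "(\<integral>x. real (card {l \<in> L. x \<in> E l}) \<partial>M) = (\<Sum>l\<in>L. measure M (E l))"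
proof -
  have card_eq: "real (card {l \<in> L. x \<in> E l}) = (\<Sum>l\<in>L. indicator (E l) x)" for x
    using sum.inter_filter[OF \<open>finite L\<close>, of "\<lambda>_. 1 :: real" "\<lambda>l. x \<in> E l"]
    by (simp add: indicator_def of_bool_def)
  show "integrable M (\<lambda>x. real (card {l \<in> L. x \<in> E l}))"
    unfolding card_eq using sets by (auto simp: less_top[symmetric])
  have "(\<integral>x. (\<Sum>l\<in>L. indicator (E l) x :: real) \<partial>M) = (\<Sum>l\<in>L. \<integral>x. indicator (E l) x \<partial>M)"
    using sets by (intro Bochner_Integration.integral_sum) (auto simp: less_top[symmetric])
  also have "\<dots> = (\<Sum>l\<in>L. measure M (E l))"
    using sets by (intro sum.cong) auto
  finally show "(\<integral>x. real (card {l \<in> L. x \<in> E l}) \<partial>M) = (\<Sum>l\<in>L. measure M (E l))"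
    by (simp only: card_eq)
qed

definition anticoncentration_bound ::
    "'a measure \<Rightarrow> ('a \<Rightarrow> 'a) \<Rightarrow> ('a \<Rightarrow> real^2) \<Rightarrow> nat \<Rightarrow> real \<Rightarrow> (real \<Rightarrow> real) \<Rightarrow> bool" where
  "anticoncentration_bound \<mu> f \<tau> s K \<Theta> \<longleftrightarrow>
     (\<forall>(n::nat \<Rightarrow> nat) (c::nat \<Rightarrow> real^2).
        n 0 = 0 \<longrightarrow> (\<forall>j\<in>{1..s}. n (j - 1) < n j) \<longrightarrow> c 0 = 0 \<longrightarrow>
        measure \<mu> {x \<in> space \<mu>. \<forall>j\<in>{1..s}. birkhoff_sum f \<tau> (n j) x \<in> unit_cube (c j)}
          \<le> K * (\<Prod>j\<in>{1..s}. 1 / real (n j - n (j - 1)))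
              * \<Theta> (Max ((\<lambda>j. norm (c j - c (j - 1)) / sqrt (real (n j - n (j - 1)))) ` {1..s})))"

lemma anticoncentrationE:
  assumes "anticoncentration \<mu> f \<tau>" and "1 \<le> s"
  obtains K \<Theta> where "antimono \<Theta>" and "(\<lambda>r. \<Theta> r * r ^ 2) integrable_on {1..}"
    and "anticoncentration_bound \<mu> f \<tau> s K \<Theta>"
proof -
  have "anticoncentration \<mu> f \<tau> \<longleftrightarrow> (\<forall>s. 1 \<le> s \<longrightarrow> (\<exists>K \<Theta>. antimono \<Theta> \<and>
      (\<lambda>r. \<Theta> r * r ^ 2) integrable_on {1..} \<and> anticoncentration_bound \<mu> f \<tau> s K \<Theta>))"
    unfolding anticoncentration_def anticoncentration_bound_def by (rule refl)
  with assms that show ?thesis by blast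
qed

lemma anticoncentration_bound_le:
  assumes bound: "anticoncentration_bound \<mu> f \<tau> s K \<Theta>"
    and mono: "antimono \<Theta>" and nonneg: "\<And>r. 0 \<le> \<Theta> r" and "1 \<le> s"
    and "n 0 = 0" and "\<And>j. j \<in> {1..s} \<Longrightarrow> n (j - 1) < n j" and "c 0 = 0"
  shows "measure \<mu> {x \<in> space \<mu>. \<forall>j\<in>{1..s}. birkhoff_sum f \<tau> (n j) x \<in> unit_cube (c j)}
           \<le> max K 0 * \<Theta> 0 * (\<Prod>j\<in>{1..s}. 1 / real (n j - n (j - 1)))"
proof -
  define P where "P = (\<Prod>j\<in>{1..s}. 1 / real (n j - n (j - 1)))"
  define M where "M = Max ((\<lambda>j. norm (c j - c (j - 1)) / sqrt (real (n j - n (j - 1)))) ` {1..s})"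
  have "0 \<le> P" by (simp add: P_def prod_nonneg)
  have "1 \<in> {1..s}" using \<open>1 \<le> s\<close> by simp
  have "0 \<le> norm (c 1 - c (1 - 1)) / sqrt (real (n 1 - n (1 - 1)))" by simp
  also have "\<dots> \<le> M"
    unfolding M_def by (rule Max_ge[OF finite_imageI[OF finite_atLeastAtMost] imageI[OF \<open>1 \<in> {1..s}\<close>]])
  finally have "\<Theta> M \<le> \<Theta> 0" using mono by (simp add: antimono_def)
  have "measure \<mu> {x \<in> space \<mu>. \<forall>j\<in>{1..s}. birkhoff_sum f \<tau> (n j) x \<in> unit_cube (c j)}
      \<le> K * P * \<Theta> M"
    using bound assms(5-7) unfolding anticoncentration_bound_def P_def M_def by blast
  also have "K * P * \<Theta> M \<le> max K 0 * P * \<Theta> M"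
    using \<open>0 \<le> P\<close> nonneg by (intro mult_right_mono) auto
  also have "\<dots> \<le> max K 0 * P * \<Theta> 0"
    using \<open>0 \<le> P\<close> \<open>\<Theta> M \<le> \<Theta> 0\<close> by (intro mult_left_mono) auto
  finally show ?thesis by (simp add: P_def mult_ac)
qed

lemma measure_near_visits_le:
  assumes "prob_space \<mu>" and [measurable]: "f \<in> measurable \<mu> \<mu>" "\<tau> \<in> borel_measurable \<mu>"
    and bound: "anticoncentration_bound \<mu> f \<tau> p K \<Theta>"
    and mono: "antimono \<Theta>" and nonneg: "\<And>r. 0 \<le> \<Theta> r" and "1 \<le> p"
    and xs: "xs \<in> increasing_tuples {0<..N} p"
  shows "measure \<mu> {x \<in> space \<mu>. \<forall>n\<in>set xs. norm (birkhoff_sum f \<tau> n x - t) \<le> 1}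
           \<le> real (card unit_offsets) ^ p * max K 0 * \<Theta> 0 * gap_weight 0 xs"
proof -
  interpret prob_space \<mu> by fact
  define n where "n j = (0 # xs) ! j" for j
  have len: "length xs = p" using xs by (simp add: increasing_tuples_def)
  have "sorted_wrt (<) (0 # xs)" using xs by (auto simp: increasing_tuples_def)
  from sorted_wrt_nth_less[OF this]
  have n_less: "n (j - 1) < n j" if "j \<in> {1..p}" for j
    using that len by (simp add: n_def)
  have n_mem: "n j \<in> set xs" if "j \<in> {1..p}" for j
    using that len by (auto simp: n_def nth_Cons')
  define cube where "cube v j = (if j = 0 then 0 else t + v j)" for v :: "nat \<Rightarrow> real^2" and j
  define F where "F v = {x \<in> space \<mu>. \<forall>j\<in>{1..p}. birkhoff_sum f \<tau> (n j) x \<in> unit_cube (cube v j)}" for v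
  define G where "G = {1..p} \<rightarrow>\<^sub>E unit_offsets"
  define E where "E = {x \<in> space \<mu>. \<forall>n\<in>set xs. norm (birkhoff_sum f \<tau> n x - t) \<le> 1}"
  have F_sets: "F v \<in> sets \<mu>" for v unfolding F_def by measurable
  have "E \<subseteq> (\<Union>v\<in>G. F v)"
  proof
    fix x assume x: "x \<in> E"
    then obtain v where "v \<in> G" and "\<forall>j\<in>{1..p}. birkhoff_sum f \<tau> (n j) x \<in> unit_cube (t + v j)"
      using near_points_in_unit_cubes[of "{1..p}" "\<lambda>j. birkhoff_sum f \<tau> (n j) x" t] n_mem
      unfolding G_def E_def by auto
    with x show "x \<in> (\<Union>v\<in>G. F v)" by (auto simp: F_def E_def cube_def)
  qed
  then have "measure \<mu> E \<le> (\<Sum>v\<in>G. measure \<mu> (F v))"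
    using F_sets finite_unit_offsets
    by (intro order.trans[OF finite_measure_mono measure_UNION_le]) (auto simp: G_def finite_PiE)
  also have "\<dots> \<le> (\<Sum>v\<in>G. max K 0 * \<Theta> 0 * gap_weight 0 xs)"
  proof (rule sum_mono)
    fix v
    have "measure \<mu> (F v) \<le> max K 0 * \<Theta> 0 * (\<Prod>j\<in>{1..p}. 1 / real (n j - n (j - 1)))"
      unfolding F_def using n_less
      by (intro anticoncentration_bound_le[OF bound mono nonneg \<open>1 \<le> p\<close>]) (simp_all add: n_def cube_def)
    then show "measure \<mu> (F v) \<le> max K 0 * \<Theta> 0 * gap_weight 0 xs"
      using prod_gaps_eq_gap_weight[of 0 xs] len by (simp add: n_def)
  qed
  also have "\<dots> = real (card unit_offsets) ^ p * max K 0 * \<Theta> 0 * gap_weight 0 xs"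
    by (simp add: G_def card_PiE)
  finally show ?thesis by (simp add: E_def)
qed

lemma local_time_power_le:
  "real (local_time f \<tau> x t N) ^ p
     \<le> 2 ^ p * (1 + real p ^ p) + 2 ^ p * real p ^ p
        * real (card {xs \<in> increasing_tuples {0<..N} p. \<forall>n\<in>set xs. norm (birkhoff_sum f \<tau> n x - t) \<le> 1})"
proof -
  define V where "V = {n \<in> {0<..N}. norm (birkhoff_sum f \<tau> n x - t) \<le> 1}"
  have "local_time f \<tau> x t N \<le> card (insert 0 V)"
    unfolding local_time_def V_def by (intro card_mono) auto
  also have "\<dots> \<le> 1 + card V"
    by (simp add: card_insert_if V_def)
  finally have "real (local_time f \<tau> x t N) ^ p \<le> (1 + real (card V)) ^ p"
    by (intro power_mono) auto
  also have "\<dots> \<le> 2 ^ p * (1 + real (card V) ^ p)"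
    by (rule one_plus_power_le) simp
  also have "\<dots> \<le> 2 ^ p * (1 + real p ^ p * (1 + real (card V choose p)))"
    using power_le_choose by simp
  also have "card V choose p = card (increasing_tuples V p)"
    by (simp add: card_increasing_tuples V_def)
  also have "increasing_tuples V p
      = {xs \<in> increasing_tuples {0<..N} p. \<forall>n\<in>set xs. norm (birkhoff_sum f \<tau> n x - t) \<le> 1}"
    by (auto simp: increasing_tuples_def V_def)
  finally show ?thesis by (simp add: algebra_simps)
qed

lemma integral_local_time_power_le:
  assumes "prob_space \<mu>" and [measurable]: "f \<in> measurable \<mu> \<mu>" "\<tau> \<in> borel_measurable \<mu>"
  shows "(\<integral>x. real (local_time f \<tau> x t N) ^ p \<partial>\<mu>)
           \<le> 2 ^ p * (1 + real p ^ p) + 2 ^ p * real p ^ p * (\<Sum>xs\<in>increasing_tuples {0<..N} p.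
                measure \<mu> {x \<in> space \<mu>. \<forall>n\<in>set xs. norm (birkhoff_sum f \<tau> n x - t) \<le> 1})"
proof -
  interpret prob_space \<mu> by fact
  define L where "L = increasing_tuples {0<..N} p"
  define E where "E xs = {x \<in> space \<mu>. \<forall>n\<in>set xs. norm (birkhoff_sum f \<tau> n x - t) \<le> 1}" for xs
  define c0 where "c0 = (2::real) ^ p * (1 + real p ^ p)"
  define c1 where "c1 = (2::real) ^ p * real p ^ p"
  have "finite L" by (simp add: L_def finite_increasing_tuples)
  have E_sets: "E xs \<in> sets \<mu>" for xs unfolding E_def by measurable
  note card_events = integral_card_events[OF \<open>finite L\<close> E_sets]
  have "(\<integral>x. real (local_time f \<tau> x t N) ^ p \<partial>\<mu>)
      \<le> (\<integral>x. c0 + c1 * real (card {xs \<in> L. x \<in> E xs}) \<partial>\<mu>)"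
  proof (rule integral_mono')
    show "integrable \<mu> (\<lambda>x. c0 + c1 * real (card {xs \<in> L. x \<in> E xs}))"
      using card_events(1) by simp
    fix x assume "x \<in> space \<mu>"
    then have "{xs \<in> L. x \<in> E xs}
        = {xs \<in> increasing_tuples {0<..N} p. \<forall>n\<in>set xs. norm (birkhoff_sum f \<tau> n x - t) \<le> 1}"
      by (auto simp: L_def E_def)
    then show "real (local_time f \<tau> x t N) ^ p \<le> c0 + c1 * real (card {xs \<in> L. x \<in> E xs})"
      using local_time_power_le[of f \<tau> x t N p] by (simp add: c0_def c1_def)
    show "0 \<le> c0 + c1 * real (card {xs \<in> L. x \<in> E xs})"
      by (simp add: c0_def c1_def)
  qed
  also have "\<dots> = c0 + c1 * (\<Sum>xs\<in>L. measure \<mu> (E xs))"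
    using card_events by (simp add: prob_space)
  finally show ?thesis by (simp add: c0_def c1_def L_def E_def)
qed

lemma local_time_moment_le_harm:
  assumes "prob_space \<mu>" and "f \<in> measurable \<mu> \<mu>" "\<tau> \<in> borel_measurable \<mu>"
    and bound: "anticoncentration_bound \<mu> f \<tau> p K \<Theta>"
    and mono: "antimono \<Theta>" and nonneg: "\<And>r. 0 \<le> \<Theta> r" and "1 \<le> p"
  shows "\<exists>A\<ge>0. \<forall>t N. 1 \<le> N \<longrightarrow> (\<integral>x. real (local_time f \<tau> x t N) ^ p \<partial>\<mu>) \<le> A * harm N ^ p"
proof -
  define D where "D = real (card unit_offsets) ^ p * max K 0 * \<Theta> 0"
  define c0 where "c0 = (2::real) ^ p * (1 + real p ^ p)"
  define c1 where "c1 = (2::real) ^ p * real p ^ p"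
  have "0 \<le> D" "0 \<le> c0" "0 \<le> c1" using nonneg by (simp_all add: D_def c0_def c1_def)
  have "(\<integral>x. real (local_time f \<tau> x t N) ^ p \<partial>\<mu>) \<le> (c0 + c1 * D) * harm N ^ p"
    if "1 \<le> N" for t N
  proof -
    let ?L = "increasing_tuples {0<..N} p"
    let ?E = "\<lambda>xs. {x \<in> space \<mu>. \<forall>n\<in>set xs. norm (birkhoff_sum f \<tau> n x - t) \<le> 1}"
    have "(\<Sum>xs\<in>?L. measure \<mu> (?E xs)) \<le> (\<Sum>xs\<in>?L. D * gap_weight 0 xs)"
      using measure_near_visits_le[OF assms(1-3) bound mono nonneg \<open>1 \<le> p\<close>]
      by (intro sum_mono) (simp add: D_def)
    also have "\<dots> \<le> D * harm N ^ p"
      unfolding sum_distrib_left[symmetric]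
      using \<open>0 \<le> D\<close> by (intro mult_left_mono sum_gap_weight_le_harm_power)
    finally have "c1 * (\<Sum>xs\<in>?L. measure \<mu> (?E xs)) \<le> c1 * (D * harm N ^ p)"
      using \<open>0 \<le> c1\<close> by (rule mult_left_mono)
    then have "(\<integral>x. real (local_time f \<tau> x t N) ^ p \<partial>\<mu>) \<le> c0 + c1 * (D * harm N ^ p)"
      using integral_local_time_power_le[OF assms(1-3), of t N p] unfolding c0_def c1_def by linarith
    also have "c0 \<le> c0 * harm N ^ p"
      using \<open>0 \<le> c0\<close> one_le_power[OF one_le_harm[OF \<open>1 \<le> N\<close>]] by (simp add: mult_le_cancel_left1)
    finally show ?thesis by (simp add: algebra_simps)
  qed
  moreover have "0 \<le> c0 + c1 * D" using \<open>0 \<le> D\<close> \<open>0 \<le> c0\<close> \<open>0 \<le> c1\<close> by simp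
  ultimately show ?thesis by blast
qed

theorem lemma3p3:
  fixes \<mu> :: "'a measure" and f :: "'a \<Rightarrow> 'a" and \<tau> :: "'a \<Rightarrow> real^2"
  assumes "prob_space \<mu>"
    and "f \<in> measurable \<mu> \<mu>" and "distr \<mu> \<mu> f = \<mu>"
    and "\<tau> \<in> borel_measurable \<mu>"
    and "anticoncentration \<mu> f \<tau>"
  shows "\<forall>p::nat. \<exists>C::real. \<forall>(t::real^2) (N::nat). N \<ge> 2 \<longrightarrow>
           (\<integral>x. real (local_time f \<tau> x t N) ^ p \<partial>\<mu>) \<le> C * (ln (real N)) ^ p"
proof
  fix p :: nat
  show "\<exists>C. \<forall>t N. N \<ge> 2 \<longrightarrow> (\<integral>x. real (local_time f \<tau> x t N) ^ p \<partial>\<mu>) \<le> C * (ln (real N)) ^ p"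
  proof (cases "p = 0")
    case True
    then show ?thesis using prob_space.prob_space[OF assms(1)] by (intro exI[of _ 1]) simp
  next
    case False
    then have "1 \<le> p" by simp
    obtain K \<Theta> where mono: "antimono \<Theta>" and int: "(\<lambda>r. \<Theta> r * r ^ 2) integrable_on {1..}"
      and bound: "anticoncentration_bound \<mu> f \<tau> p K \<Theta>"
      by (rule anticoncentrationE[OF assms(5) \<open>1 \<le> p\<close>])
    have nonneg: "0 \<le> \<Theta> r" for r
      by (rule antimono_nonneg_if_integrable_on[OF mono int])
    obtain A where "0 \<le> A"
      and A: "\<And>t N. 1 \<le> N \<Longrightarrow> (\<integral>x. real (local_time f \<tau> x t N) ^ p \<partial>\<mu>) \<le> A * harm N ^ p"
      using local_time_moment_le_harm[OF assms(1,2,4) bound mono nonneg \<open>1 \<le> p\<close>] by blast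
    have "(\<integral>x. real (local_time f \<tau> x t N) ^ p \<partial>\<mu>) \<le> A * (5 / 2) ^ p * ln (real N) ^ p"
      if "2 \<le> N" for t N
    proof -
      have "(\<integral>x. real (local_time f \<tau> x t N) ^ p \<partial>\<mu>) \<le> A * harm N ^ p"
        using A that by simp
      also have "\<dots> \<le> A * (5 / 2 * ln (real N)) ^ p"
        using \<open>0 \<le> A\<close> harm_le_ln[OF that] by (intro mult_left_mono power_mono) (auto simp: harm_nonneg)
      finally show ?thesis by (simp only: power_mult_distrib mult.assoc)
    qed
    then show ?thesis by blast
  qed
qed

end
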